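(* Let $K\ge 2$, let $L_1,\dots,L_K:\mathbb{R}^d\to\mathbb{R}$ be twice differentiable, and let $\mu,\rho,\delta\ge 0$. Assume that every $L_k$ is $\mu$-smooth and $\rho$-Hessian Lipschitz. Let $\widehat{w}_1,\dots,\widehat{w}_{K-1}\in\mathbb{R}^d$ and let $H_1,\dots,H_{K-1}$ be symmetric $d\times d$ matrices with $\|H_k\|_2\le\mu$ and $\|H_k-\nabla^2L_k(\widehat{w}_k)\|_2\le\delta$ for all $k\in[K-1]$. Define \[ \widetilde{L}_{K-1}(w)=\sum_{k=1}^{K-1}\Big(L_k(\widehat{w}_k)+(w-\widehat{w}_k)^\top\nabla L_k(\widehat{w}_k)+\tfrac12(w-\widehat{w}_k)^\top H_k(w-\widehat{w}_k)\Big), \] $\widetilde{F}(w)=\frac1K\big(\widetilde{L}_{K-1}(w)+L_K(w)\big)$ and $F(w)=\frac1K\sum_{k=1}^K L_k(w)$. Let $w_0=\widehat{w}_{K-1}$ and $w_t=w_{t-1}-\eta\nabla\widetilde{F}(w_{t-1})$ for $t\ge1$, with step size $\eta>0$. Suppose that for some iteration $t\ge1$ and some $c>1$, \[ \|\nabla\widetilde{F}(w_{t-1})\|_2\ \ge\ \frac{c}{K}\sum_{k=1}^{K-1}\Big(\delta\|w_{t-1}-\widehat{w}_k\|_2+\rho\|w_{t-1}-\widehat{w}_k\|_2^2\Big), \] and that $\eta\le \frac{2(1-1/c)}{\mu}$. Then \[ F(w_t)\le F(w_{t-1})-\eta\Big(1-\frac1c-\frac{\mu\eta}{2}\Big)\|\nabla\widetilde{F}(w_{t-1})\|_2^2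 . \]
   Context: $\|\cdot\|_2$ denotes the Euclidean norm for vectors and the operator norm for matrices; $[N]=\{1,\dots,N\}$. A differentiable $f$ is $\mu$-smooth if $\|\nabla f(w)-\nabla f(w')\|_2\le\mu\|w-w'\|_2$ for all $w,w'$, and $\rho$-Hessian Lipschitz if $\|\nabla^2 f(w)-\nabla^2 f(w')\|_2\le\rho\|w-w'\|_2$ for all $w,w'$. The points $\widehat{w}_k$ represent the model parameters obtained at the end of task $k$ in continual learning, and $H_k$ an approximation of the Hessian of the $k$-th task loss there. *)

theory Defs
  imports "HOL-Analysis.Analysis"
begin

definition grad :: "(real^'d \<Rightarrow> real) \<Rightarrow> real^'d \<Rightarrow> real^'d" where
  "grad f w = (THE g. (f has_derivative (\<lambda>h. g \<bullet> h)) (at w))"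

definition hess :: "(real^'d \<Rightarrow> real) \<Rightarrow> real^'d \<Rightarrow> real^'d^'d" where
  "hess f w = (THE A. (grad f has_derivative (\<lambda>h. A *v h)) (at w))"

definition twice_differentiable :: "(real^'d \<Rightarrow> real) \<Rightarrow> bool" where
  "twice_differentiable f \<longleftrightarrow>
     (\<forall>w. \<exists>g. (f has_derivative (\<lambda>h. g \<bullet> h)) (at w)) \<and>
     (\<forall>w. \<exists>A. (grad f has_derivative (\<lambda>h. A *v h)) (at w))"

definition opnorm :: "real^'d^'d \<Rightarrow> real" where
  "opnorm A = onorm (\<lambda>x. A *v x)"

definition smooth :: "real \<Rightarrow> (real^'d \<Rightarrow> real) \<Rightarrow> bool" where
  "smooth \<mu> f \<longleftrightarrow> (\<forall>w w'. norm (grad f w - grad f w') \<le> \<mu> * norm (w - w'))"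

definition hessian_lipschitz :: "real \<Rightarrow> (real^'d \<Rightarrow> real) \<Rightarrow> bool" where
  "hessian_lipschitz \<rho> f \<longleftrightarrow> (\<forall>w w'. opnorm (hess f w - hess f w') \<le> \<rho> * norm (w - w'))"

definition Ltilde ::
  "nat \<Rightarrow> (nat \<Rightarrow> real^'d \<Rightarrow> real) \<Rightarrow> (nat \<Rightarrow> real^'d) \<Rightarrow> (nat \<Rightarrow> real^'d^'d) \<Rightarrow> real^'d \<Rightarrow> real" where
  "Ltilde K L wh H w = (\<Sum>k=1..K-1. L k (wh k) + (w - wh k) \<bullet> grad (L k) (wh k)
        + (1/2) * ((w - wh k) \<bullet> (H k *v (w - wh k))))"

definition Ftilde ::
  "nat \<Rightarrow> (nat \<Rightarrow> real^'d \<Rightarrow> real) \<Rightarrow> (nat \<Rightarrow> real^'d) \<Rightarrow> (nat \<Rightarrow> real^'d^'d) \<Rightarrow> real^'d \<Rightarrow> real" where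
  "Ftilde K L wh H w = (1 / real K) * (Ltilde K L wh H w + L K w)"

definition Fobj :: "nat \<Rightarrow> (nat \<Rightarrow> real^'d \<Rightarrow> real) \<Rightarrow> real^'d \<Rightarrow> real" where
  "Fobj K L w = (1 / real K) * (\<Sum>k=1..K. L k w)"

end

theory Submission imports Defs begin

text \<open>
  The iteration is gradient descent on the surrogate Ftilde, whose gradient differs from that of
  F = Fobj only in the first K - 1 tasks, where grad L_k(w) is replaced by the linearisation
  grad L_k(wh_k) + H_k (w - wh_k). Hessian-Lipschitzness and |H_k - hess L_k(wh_k)| \<le> \<delta> bound
  this error by \<delta> |w - wh_k| + \<rho> |w - wh_k|^2 per task, so the gradient condition makes the step
  direction g an approximation of grad F with relative error 1/c. Hence
  grad F \<bullet> g \<ge> (1 - 1/c) |g|^2, and the descent lemma for the \<mu>-smooth F gives the decrease.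
\<close>

lemma grad_eqI:
  assumes "(f has_derivative (\<lambda>h. g \<bullet> h)) (at w)"
  shows "grad f w = g"
  unfolding grad_def
proof (rule the_equality)
  fix g' assume "(f has_derivative (\<lambda>h. g' \<bullet> h)) (at w)"
  from has_derivative_unique[OF this assms] have "\<And>h. g' \<bullet> h = g \<bullet> h" by metis
  from this[of "g' - g"] have "(g' - g) \<bullet> (g' - g) = 0" by (simp add: inner_diff_left)
  then show "g' = g" by simp
qed (rule assms)

lemma hess_eqI:
  assumes "(grad f has_derivative (\<lambda>h. A *v h)) (at w)"
  shows "hess f w = A"
  unfolding hess_def
proof (rule the_equality)
  fix B assume "(grad f has_derivative (\<lambda>h. B *v h)) (at w)"
  from has_derivative_unique[OF this assms] have "\<And>h. B *v h = A *v h" by metis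
  then show "B = A" by (simp add: matrix_eq)
qed (rule assms)

lemma twice_differentiable_has_derivative_grad:
  assumes "twice_differentiable f"
  shows "(f has_derivative (\<lambda>h. grad f w \<bullet> h)) (at w)"
proof -
  obtain g where "(f has_derivative (\<lambda>h. g \<bullet> h)) (at w)"
    using assms unfolding twice_differentiable_def by blast
  with grad_eqI[OF this] show ?thesis by simp
qed

lemma twice_differentiable_has_derivative_hess:
  assumes "twice_differentiable f"
  shows "(grad f has_derivative (\<lambda>h. hess f w *v h)) (at w)"
proof -
  obtain A where "(grad f has_derivative (\<lambda>h. A *v h)) (at w)"
    using assms unfolding twice_differentiable_def by blast
  with hess_eqI[OF this] show ?thesis by simp
qed

lemma norm_matrix_vector_mult_le_opnorm: "norm (A *v x) \<le> opnorm A * norm x"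
  unfolding opnorm_def by (rule onorm) simp

lemma opnorm_minus_commute: "opnorm (A - B) = opnorm (B - A)"
proof -
  have "(\<lambda>v. (A - B) *v v) = (\<lambda>v. - ((B - A) *v v))"
    by (auto simp: matrix_vector_mult_diff_rdistrib)
  then show ?thesis unfolding opnorm_def by (simp only: onorm_neg)
qed

lemma inner_symmetric_matrix_vector_mult:
  fixes H :: "real^'d^'d"
  assumes "transpose H = H"
  shows "x \<bullet> (H *v y) = (H *v x) \<bullet> y"
proof -
  have "x \<bullet> (H *v y) = (x v* H) \<bullet> y" by (simp add: dot_lmul_matrix)
  also have "x v* H = transpose H *v x" by simp
  finally show ?thesis using assms by simp
qed

lemma has_derivative_quadratic_model:
  fixes H :: "real^'d^'d"
  assumes "transpose H = H"
  shows "((\<lambda>z. c + (z - a) \<bullet> g + (1/2) * ((z - a) \<bullet> (H *v (z - a)))) has_derivative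
           (\<lambda>h. (g + H *v (z - a)) \<bullet> h)) (at z)"
proof -
  have "((\<lambda>z. c + (z - a) \<bullet> g + (1/2) * ((z - a) \<bullet> (H *v (z - a)))) has_derivative
          (\<lambda>h. h \<bullet> g + (1/2) * ((z - a) \<bullet> (H *v h) + h \<bullet> (H *v (z - a))))) (at z)"
    by (auto intro!: derivative_eq_intros
          bounded_linear.has_derivative[OF matrix_vector_mul_bounded_linear]
        simp: matrix_vector_mult_diff_distrib)
  moreover have "(\<lambda>h. h \<bullet> g + (1/2) * ((z - a) \<bullet> (H *v h) + h \<bullet> (H *v (z - a))))
      = (\<lambda>h. (g + H *v (z - a)) \<bullet> h)"
    using inner_symmetric_matrix_vector_mult[OF assms, of "z - a"]
    by (auto simp: inner_commute inner_add_left inner_add_right)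
  ultimately show ?thesis by simp
qed

lemma descent_lemma:
  fixes f :: "'a::real_inner \<Rightarrow> real"
  assumes der: "\<And>z. (f has_derivative (\<lambda>h. G z \<bullet> h)) (at z)"
    and lip: "\<And>z z'. norm (G z - G z') \<le> \<mu> * norm (z - z')"
  shows "f y \<le> f x + G x \<bullet> (y - x) + \<mu> / 2 * (norm (y - x))\<^sup>2"
proof -
  define d where "d = y - x"
  define h where "h s = f (x + s *\<^sub>R d) - s * (G x \<bullet> d) - \<mu> / 2 * s\<^sup>2 * (norm d)\<^sup>2" for s
  have "h 1 \<le> h 0"
  proof (rule DERIV_nonpos_imp_nonincreasing[of 0 1 h])
    fix s :: real assume s: "0 \<le> s" "s \<le> 1"
    have "((\<lambda>s. x + s *\<^sub>R d) has_derivative (\<lambda>t. t *\<^sub>R d)) (at s)"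
      by (auto intro!: derivative_eq_intros)
    from has_derivative_compose[OF this der]
    have f': "((\<lambda>s. f (x + s *\<^sub>R d)) has_real_derivative (G (x + s *\<^sub>R d) \<bullet> d)) (at s)"
      unfolding has_field_derivative_def
      by (simp add: mult.commute[of _ "G (x + s *\<^sub>R d) \<bullet> d"])
    have h': "(h has_real_derivative
        (G (x + s *\<^sub>R d) \<bullet> d - G x \<bullet> d - \<mu> / 2 * (2 * s) * (norm d)\<^sup>2)) (at s)"
      unfolding h_def[abs_def] by (rule derivative_eq_intros f' | simp)+
    have "(G (x + s *\<^sub>R d) - G x) \<bullet> d \<le> norm (G (x + s *\<^sub>R d) - G x) * norm d"
      by (rule norm_cauchy_schwarz)
    also have "\<dots> \<le> (\<mu> * norm (s *\<^sub>R d)) * norm d"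
      using lip[of "x + s *\<^sub>R d" x] by (intro mult_right_mono) auto
    also have "\<dots> = \<mu> * s * (norm d)\<^sup>2" using s by (simp add: power2_eq_square)
    finally have "G (x + s *\<^sub>R d) \<bullet> d - G x \<bullet> d - \<mu> / 2 * (2 * s) * (norm d)\<^sup>2 \<le> 0"
      by (simp add: inner_diff_left)
    with h' show "\<exists>y. (h has_real_derivative y) (at s) \<and> y \<le> 0" by blast
  qed simp
  then show ?thesis unfolding h_def d_def by simp
qed

lemma inexact_gradient_step_decrease:
  fixes f :: "'a::real_inner \<Rightarrow> real"
  assumes der: "\<And>z. (f has_derivative (\<lambda>h. G z \<bullet> h)) (at z)"
    and lip: "\<And>z z'. norm (G z - G z') \<le> \<mu> * norm (z - z')"
    and err: "norm (G x - g) \<le> norm g / c"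
    and "\<eta> \<ge> 0"
  shows "f (x - \<eta> *\<^sub>R g) \<le> f x - \<eta> * (1 - 1/c - \<mu> * \<eta> / 2) * (norm g)\<^sup>2"
proof -
  have "G x \<bullet> g = g \<bullet> g + (G x - g) \<bullet> g" by (simp add: inner_diff_left)
  moreover have "(G x - g) \<bullet> g \<ge> - (norm g / c * norm g)"
    using Cauchy_Schwarz_ineq2[of "G x - g" g] mult_right_mono[OF err norm_ge_zero, of g]
    by linarith
  moreover have "(1 - 1/c) * (norm g)\<^sup>2 = g \<bullet> g - norm g / c * norm g"
    by (simp add: power2_norm_eq_inner[symmetric] power2_eq_square algebra_simps)
  ultimately have aligned: "G x \<bullet> g \<ge> (1 - 1/c) * (norm g)\<^sup>2"
    by linarith
  have "f (x - \<eta> *\<^sub>R g) \<le> f x - \<eta> * (G x \<bullet> g) + \<mu> / 2 * \<eta>\<^sup>2 * (norm g)\<^sup>2"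
    using descent_lemma[OF der lip, of "x - \<eta> *\<^sub>R g" x] by (simp add: power_mult_distrib)
  also have "\<dots> \<le> f x - \<eta> * ((1 - 1/c) * (norm g)\<^sup>2) + \<mu> / 2 * \<eta>\<^sup>2 * (norm g)\<^sup>2"
    using aligned \<open>\<eta> \<ge> 0\<close> by (simp add: mult_left_mono)
  also have "\<dots> = f x - \<eta> * (1 - 1/c - \<mu> * \<eta> / 2) * (norm g)\<^sup>2"
    by (simp add: algebra_simps power2_eq_square)
  finally show ?thesis .
qed

lemma grad_taylor_hessian_lipschitz:
  fixes f :: "real^'d \<Rightarrow> real"
  assumes "twice_differentiable f" and "hessian_lipschitz \<rho> f" and "\<rho> \<ge> 0"
  shows "norm (grad f x - grad f a - hess f a *v (x - a)) \<le> \<rho> * (norm (x - a))\<^sup>2"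
proof -
  let ?r = "\<lambda>z. grad f z - hess f a *v z"
  have "norm (?r x - ?r a) \<le> (\<rho> * norm (x - a)) * norm (x - a)"
  proof (rule differentiable_bound[where S = "closed_segment a x"
        and f' = "\<lambda>z h. (hess f z - hess f a) *v h"])
    fix z assume z: "z \<in> closed_segment a x"
    have "(?r has_derivative (\<lambda>h. hess f z *v h - hess f a *v h)) (at z)"
      by (intro has_derivative_diff twice_differentiable_has_derivative_hess assms(1)
          bounded_linear.has_derivative[OF matrix_vector_mul_bounded_linear] has_derivative_ident)
    then show "(?r has_derivative (\<lambda>h. (hess f z - hess f a) *v h)) (at z within closed_segment a x)"
      by (simp add: matrix_vector_mult_diff_rdistrib has_derivative_at_withinI)
    have "onorm (\<lambda>h. (hess f z - hess f a) *v h) \<le> \<rho> * norm (z - a)"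
      using assms(2) unfolding hessian_lipschitz_def opnorm_def by blast
    also have "\<dots> \<le> \<rho> * norm (x - a)"
      using segment_bound(1)[OF z] assms(3) by (simp add: mult_left_mono)
    finally show "onorm (\<lambda>h. (hess f z - hess f a) *v h) \<le> \<rho> * norm (x - a)" .
  qed auto
  then show ?thesis
    by (simp add: power2_eq_square matrix_vector_mult_diff_distrib algebra_simps)
qed

lemma grad_error_approx_hessian:
  fixes f :: "real^'d \<Rightarrow> real"
  assumes "twice_differentiable f" and "hessian_lipschitz \<rho> f" and "\<rho> \<ge> 0"
    and "opnorm (H - hess f a) \<le> \<delta>"
  shows "norm (grad f x - grad f a - H *v (x - a)) \<le> \<delta> * norm (x - a) + \<rho> * (norm (x - a))\<^sup>2"
proof -
  have "grad f x - grad f a - H *v (x - a)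
      = (grad f x - grad f a - hess f a *v (x - a)) + (hess f a - H) *v (x - a)"
    by (simp add: matrix_vector_mult_diff_rdistrib)
  then have "norm (grad f x - grad f a - H *v (x - a))
      \<le> norm (grad f x - grad f a - hess f a *v (x - a)) + norm ((hess f a - H) *v (x - a))"
    by (metis norm_triangle_ineq)
  also have "\<dots> \<le> \<rho> * (norm (x - a))\<^sup>2 + opnorm (H - hess f a) * norm (x - a)"
    by (intro add_mono grad_taylor_hessian_lipschitz assms(1-3))
      (use norm_matrix_vector_mult_le_opnorm[of "hess f a - H"] in \<open>simp only: opnorm_minus_commute[of "hess f a"]\<close>)
  also have "\<dots> \<le> \<rho> * (norm (x - a))\<^sup>2 + \<delta> * norm (x - a)"
    using assms(4) by (intro add_left_mono mult_right_mono) auto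
  finally show ?thesis by simp
qed

lemma has_derivative_Fobj:
  assumes "\<And>k. k \<in> {1..K} \<Longrightarrow> (L k has_derivative (\<lambda>h. grad (L k) z \<bullet> h)) (at z)"
  shows "(Fobj K L has_derivative
           (\<lambda>h. ((1 / real K) *\<^sub>R (\<Sum>k=1..K. grad (L k) z)) \<bullet> h)) (at z)"
proof -
  have "((\<lambda>z. (1 / real K) * (\<Sum>k=1..K. L k z)) has_derivative
          (\<lambda>h. (1 / real K) * (\<Sum>k=1..K. grad (L k) z \<bullet> h))) (at z)"
    by (intro has_derivative_mult_right has_derivative_sum assms) auto
  then show ?thesis unfolding Fobj_def[abs_def] by (simp add: inner_sum_left)
qed

lemma has_derivative_Ftilde:
  assumes "\<And>k. k \<in> {1..K-1} \<Longrightarrow> transpose (H k) = H k"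
    and "(L K has_derivative (\<lambda>h. grad (L K) z \<bullet> h)) (at z)"
  shows "(Ftilde K L wh H has_derivative
           (\<lambda>h. ((1 / real K) *\<^sub>R ((\<Sum>k=1..K-1. grad (L k) (wh k) + H k *v (z - wh k))
                                   + grad (L K) z)) \<bullet> h)) (at z)"
proof -
  have "(Ltilde K L wh H has_derivative
          (\<lambda>h. \<Sum>k=1..K-1. (grad (L k) (wh k) + H k *v (z - wh k)) \<bullet> h)) (at z)"
    unfolding Ltilde_def[abs_def]
    by (rule has_derivative_sum, rule has_derivative_quadratic_model, rule assms(1)) auto
  then have "((\<lambda>z. (1 / real K) * (Ltilde K L wh H z + L K z)) has_derivative
      (\<lambda>h. (1 / real K) * ((\<Sum>k=1..K-1. (grad (L k) (wh k) + H k *v (z - wh k)) \<bullet> h)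
                           + grad (L K) z \<bullet> h))) (at z)"
    by (intro has_derivative_mult_right has_derivative_add assms(2))
  then show ?thesis
    unfolding Ftilde_def[abs_def] by (simp add: inner_sum_left inner_add_left)
qed

lemma grad_Fobj:
  assumes "\<And>k. k \<in> {1..K} \<Longrightarrow> twice_differentiable (L k)"
  shows "grad (Fobj K L) z = (1 / real K) *\<^sub>R (\<Sum>k=1..K. grad (L k) z)"
  by (intro grad_eqI has_derivative_Fobj twice_differentiable_has_derivative_grad assms)

lemma has_derivative_grad_Fobj:
  assumes "\<And>k. k \<in> {1..K} \<Longrightarrow> twice_differentiable (L k)"
  shows "(Fobj K L has_derivative (\<lambda>h. grad (Fobj K L) z \<bullet> h)) (at z)"
proof -
  have "(Fobj K L has_derivative (\<lambda>h. ((1 / real K) *\<^sub>R (\<Sum>k=1..K. grad (L k) z)) \<bullet> h)) (at z)"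
    by (rule has_derivative_Fobj) (simp add: twice_differentiable_has_derivative_grad assms)
  with grad_eqI[OF this] show ?thesis by simp
qed

lemma smooth_Fobj:
  assumes "K \<ge> 1"
    and "\<And>k. k \<in> {1..K} \<Longrightarrow> twice_differentiable (L k)"
    and "\<And>k. k \<in> {1..K} \<Longrightarrow> smooth \<mu> (L k)"
  shows "smooth \<mu> (Fobj K L)"
  unfolding smooth_def
proof (intro allI)
  fix z z'
  have "grad (Fobj K L) z - grad (Fobj K L) z' = (1 / real K) *\<^sub>R (\<Sum>k=1..K. grad (L k) z - grad (L k) z')"
    using grad_Fobj[of K L, OF assms(2)] by (simp add: sum_subtractf scaleR_diff_right)
  then have "norm (grad (Fobj K L) z - grad (Fobj K L) z')
      = (1 / real K) * norm (\<Sum>k=1..K. grad (L k) z - grad (L k) z')"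
    by simp
  also have "\<dots> \<le> (1 / real K) * (\<Sum>k=1..K. norm (grad (L k) z - grad (L k) z'))"
    by (intro mult_left_mono norm_sum) auto
  also have "\<dots> \<le> (1 / real K) * (\<Sum>k=1..K. \<mu> * norm (z - z'))"
    using assms(3) unfolding smooth_def by (intro mult_left_mono sum_mono) auto
  also have "\<dots> = \<mu> * norm (z - z')" using assms(1) by simp
  finally show "norm (grad (Fobj K L) z - grad (Fobj K L) z') \<le> \<mu> * norm (z - z')" .
qed

lemma norm_grad_Fobj_minus_grad_Ftilde:
  assumes "K \<ge> 1"
    and twice: "\<And>k. k \<in> {1..K} \<Longrightarrow> twice_differentiable (L k)"
    and hlip: "\<And>k. k \<in> {1..K-1} \<Longrightarrow> hessian_lipschitz \<rho> (L k)" and "\<rho> \<ge> 0"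
    and Hsym: "\<And>k. k \<in> {1..K-1} \<Longrightarrow> transpose (H k) = H k"
    and Happrox: "\<And>k. k \<in> {1..K-1} \<Longrightarrow> opnorm (H k - hess (L k) (wh k)) \<le> \<delta>"
  shows "norm (grad (Fobj K L) x - grad (Ftilde K L wh H) x)
           \<le> (1 / real K) * (\<Sum>k=1..K-1. \<delta> * norm (x - wh k) + \<rho> * (norm (x - wh k))\<^sup>2)"
proof -
  have "grad (Ftilde K L wh H) x
      = (1 / real K) *\<^sub>R ((\<Sum>k=1..K-1. grad (L k) (wh k) + H k *v (x - wh k)) + grad (L K) x)"
    using assms(1) by (intro grad_eqI has_derivative_Ftilde Hsym
        twice_differentiable_has_derivative_grad twice) auto
  moreover have "(\<Sum>k=1..K. grad (L k) x) = (\<Sum>k=1..K-1. grad (L k) x) + grad (L K) x"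
    using assms(1) by (cases K) auto
  then have "(\<Sum>k=1..K. grad (L k) x)
        - ((\<Sum>k=1..K-1. grad (L k) (wh k) + H k *v (x - wh k)) + grad (L K) x)
      = (\<Sum>k=1..K-1. grad (L k) x - grad (L k) (wh k) - H k *v (x - wh k))"
    by (simp add: sum_subtractf sum.distrib algebra_simps)
  ultimately have "grad (Fobj K L) x - grad (Ftilde K L wh H) x
      = (1 / real K) *\<^sub>R (\<Sum>k=1..K-1. grad (L k) x - grad (L k) (wh k) - H k *v (x - wh k))"
    using grad_Fobj[of K L, OF twice] by (simp flip: scaleR_diff_right)
  then have "norm (grad (Fobj K L) x - grad (Ftilde K L wh H) x)
      = (1 / real K) * norm (\<Sum>k=1..K-1. grad (L k) x - grad (L k) (wh k) - H k *v (x - wh k))"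
    by simp
  also have "\<dots> \<le> (1 / real K) * (\<Sum>k=1..K-1. norm (grad (L k) x - grad (L k) (wh k) - H k *v (x - wh k)))"
    by (intro mult_left_mono norm_sum) auto
  also have "\<dots> \<le> (1 / real K) * (\<Sum>k=1..K-1. \<delta> * norm (x - wh k) + \<rho> * (norm (x - wh k))\<^sup>2)"
    by (intro mult_left_mono sum_mono grad_error_approx_hessian twice hlip Happrox \<open>\<rho> \<ge> 0\<close>) auto
  finally show ?thesis .
qed

theorem theorem1:
  fixes K :: nat and L :: "nat \<Rightarrow> real^'d \<Rightarrow> real"
    and \<mu> \<rho> \<delta> \<eta> c :: real
    and wh :: "nat \<Rightarrow> real^'d" and H :: "nat \<Rightarrow> real^'d^'d"
    and w :: "nat \<Rightarrow> real^'d" and t :: nat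
  assumes K2: "K \<ge> 2"
    and twice: "\<And>k. k \<in> {1..K} \<Longrightarrow> twice_differentiable (L k)"
    and nonneg: "\<mu> \<ge> 0" "\<rho> \<ge> 0" "\<delta> \<ge> 0"
    and smooth: "\<And>k. k \<in> {1..K} \<Longrightarrow> smooth \<mu> (L k)"
    and hlip: "\<And>k. k \<in> {1..K} \<Longrightarrow> hessian_lipschitz \<rho> (L k)"
    and Hsym: "\<And>k. k \<in> {1..K-1} \<Longrightarrow> transpose (H k) = H k"
    and Hbound: "\<And>k. k \<in> {1..K-1} \<Longrightarrow> opnorm (H k) \<le> \<mu>"
    and Happrox: "\<And>k. k \<in> {1..K-1} \<Longrightarrow> opnorm (H k - hess (L k) (wh k)) \<le> \<delta>"
    and w0: "w 0 = wh (K-1)"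
    and wstep: "\<And>s. w (Suc s) = w s - \<eta> *\<^sub>R grad (Ftilde K L wh H) (w s)"
    and eta_pos: "\<eta> > 0"
    and t1: "t \<ge> 1"
    and c1: "c > 1"
    and gradcond: "norm (grad (Ftilde K L wh H) (w (t-1))) \<ge>
        (c / real K) * (\<Sum>k=1..K-1. \<delta> * norm (w (t-1) - wh k) + \<rho> * (norm (w (t-1) - wh k))^2)"
    and eta_le: "\<eta> * \<mu> \<le> 2 * (1 - 1/c)"
  shows "Fobj K L (w t) \<le> Fobj K L (w (t-1))
           - \<eta> * (1 - 1/c - \<mu> * \<eta> / 2) * (norm (grad (Ftilde K L wh H) (w (t-1))))^2"
proof -
  define x where "x = w (t - 1)"
  define g where "g = grad (Ftilde K L wh H) x"
  have step: "w t = x - \<eta> *\<^sub>R g"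
    using wstep[of "t - 1"] t1 unfolding x_def g_def by simp
  have "norm (grad (Fobj K L) x - g)
      \<le> (1 / real K) * (\<Sum>k=1..K-1. \<delta> * norm (x - wh k) + \<rho> * (norm (x - wh k))\<^sup>2)"
    unfolding g_def using K2 nonneg(2)
    by (intro norm_grad_Fobj_minus_grad_Ftilde twice hlip Hsym Happrox) auto
  also have "\<dots> \<le> norm g / c"
    using gradcond c1 unfolding x_def[symmetric] g_def[symmetric] by (simp add: field_simps)
  finally have err: "norm (grad (Fobj K L) x - g) \<le> norm g / c" .
  have "\<And>z. (Fobj K L has_derivative (\<lambda>h. grad (Fobj K L) z \<bullet> h)) (at z)"
    by (rule has_derivative_grad_Fobj) (rule twice)
  moreover have "smooth \<mu> (Fobj K L)"
    using K2 twice smooth by (intro smooth_Fobj) auto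
  ultimately have "Fobj K L (x - \<eta> *\<^sub>R g) \<le> Fobj K L x - \<eta> * (1 - 1/c - \<mu> * \<eta> / 2) * (norm g)\<^sup>2"
    using eta_pos unfolding smooth_def
    by (intro inexact_gradient_step_decrease[where G = "grad (Fobj K L)", OF _ _ err]) auto
  then show ?thesis unfolding step g_def x_def .
qed

end
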